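(* Let $S\subset\mathbb P^2\times\mathbb P^2$ be a smooth K3 surface over $\overline{\mathbb Q}$ which is the intersection of a hypersurface of bidegree $(1,1)$ and a hypersurface of bidegree $(2,2)$. For $i=1,2$ let $p_i\colon S\to\mathbb P^2$ be the $i$-th projection (a double cover) with associated covering involution $\sigma_i$, and $L_i=p_i^*\mathcal O_{\mathbb P^2}(1)$; put $L=L_1+L_2$, which satisfies $\sigma_1^*L+\sigma_2^*L\cong 4L$. Let $E^+=(2+\sqrt3)L_1-L_2$ and $E^-=-L_1+(2+\sqrt3)L_2$ in $\operatorname{Pic}(S)\otimes\mathbb R$. Let $\widehat h^+$ be the unique function $S(\overline{\mathbb Q})\to\mathbb R$ with $\widehat h^+=h_{E^+}+O(1)$ and $\widehat h^+\circ(\sigma_2\circ\sigma_1)=(7+4\sqrt3)\widehat h^+$, and $\widehat h^-$ the unique function with $\widehat h^-=h_{E^-}+O(1)$ and $\widehat h^-\circ(\sigma_1\circ\sigma_2)=(7+4\sqrt3)\widehat h^-$; set $\widehat h_{Sil}=\widehat h^++\widehat h^-$. Then $\widehat h_{Sil}=(1+\sqrt3)\,\widehat h_{L,\{\sigma_1,\sigma_2\}}$.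
   Context: For a projective variety $X$ over a number field, morphisms $f_1,\dots,f_k\colon X\to X$, and $L\in\operatorname{Pic}(X)\otimes\mathbb R$ with $\sum_i f_i^*L\cong dL$, $d>k$, the canonical height $\widehat h_{L,\{f_1,\dots,f_k\}}$ is the unique function $X(\overline{\mathbb Q})\to\mathbb R$ with $\widehat h=h_L+O(1)$ and $\sum_i\widehat h(f_i(x))=d\,\widehat h(x)$ for all $x$. Here $h_M$ denotes a Weil height associated with $M\in\operatorname{Pic}\otimes\mathbb R$ (well-defined up to bounded functions). *)

theory Defs
  imports "HOL-Analysis.Analysis" "HOL-Computational_Algebra.Polynomial"
begin

text \<open>Qbar is modelled as the algebraic complex numbers. A point of P^2(Qbar) is
represented by its unique normalised coordinate vector (x 0, x 1, x 2) whose first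
nonzero coordinate equals 1; coordinates with index at least 3 are 0.\<close>

definition P2 :: "(nat \<Rightarrow> complex) set" where
  "P2 = {x. (\<forall>i\<ge>3. x i = 0) \<and> (\<forall>i<3. algebraic (x i)) \<and>
            (\<exists>j<3. x j = 1 \<and> (\<forall>i<j. x i = 0))}"

definition is_subfield :: "complex set \<Rightarrow> bool" where
  "is_subfield K \<longleftrightarrow> 0 \<in> K \<and> 1 \<in> K \<and>
     (\<forall>a\<in>K. \<forall>b\<in>K. a + b \<in> K \<and> a - b \<in> K \<and> a * b \<in> K) \<and>
     (\<forall>a\<in>K. a \<noteq> 0 \<longrightarrow> inverse a \<in> K)"

definition gen_field :: "complex set \<Rightarrow> complex set" where
  "gen_field X = \<Inter>{K. is_subfield K \<and> X \<subseteq> K}"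

text \<open>Field embeddings K \<rightarrow> C (extensional, so that there are exactly [K:Q] of them).\<close>
definition embeddings :: "complex set \<Rightarrow> (complex \<Rightarrow> complex) set" where
  "embeddings K = {\<sigma>. (\<forall>a\<in>K. \<forall>b\<in>K. \<sigma> (a + b) = \<sigma> a + \<sigma> b \<and> \<sigma> (a * b) = \<sigma> a * \<sigma> b)
                      \<and> \<sigma> 1 = 1 \<and> (\<forall>a. a \<notin> K \<longrightarrow> \<sigma> a = 0)}"

definition ring_of_integers :: "complex set \<Rightarrow> complex set" where
  "ring_of_integers K = {a \<in> K. algebraic_int a}"

definition ideal_norm :: "complex set \<Rightarrow> complex set \<Rightarrow> nat" where
  "ideal_norm R I = card (R // {(a, b). a \<in> R \<and> b \<in> R \<and> a - b \<in> I})"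

text \<open>For a point x with number field K = Q(x_0,x_1,x_2), choose an integral representative
y = c x (c a positive integer); then
  h(x) = (1/[K:Q]) (sum over embeddings s of log max_i |s(y_i)|  -  log N(y_0,y_1,y_2)),
which is the usual sum over all places of K of n_v log max_i |y_i|_v, divided by [K:Q].\<close>
definition weil_height :: "(nat \<Rightarrow> complex) \<Rightarrow> real" where
  "weil_height x =
    (let K = gen_field (x ` {..<3});
         c = (SOME c :: nat. c > 0 \<and> (\<forall>i<3. algebraic_int (of_nat c * x i)));
         y = (\<lambda>i. of_nat c * x i);
         R = ring_of_integers K;
         I = {\<Sum>i<3. t i * y i | t. \<forall>i<3. t i \<in> R};
         E = embeddings K
     in ((\<Sum>\<sigma>\<in>E. ln (Max ((\<lambda>i. cmod (\<sigma> (y i))) ` {..<3}))) - ln (real (ideal_norm R I)))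
        / real (card E))"

definition form11 :: "(nat \<Rightarrow> nat \<Rightarrow> complex) \<Rightarrow> (nat \<Rightarrow> complex) \<Rightarrow> (nat \<Rightarrow> complex) \<Rightarrow> complex" where
  "form11 a u v = (\<Sum>i<3. \<Sum>j<3. a i j * u i * v j)"

definition form22 :: "(nat \<Rightarrow> nat \<Rightarrow> nat \<Rightarrow> nat \<Rightarrow> complex) \<Rightarrow> (nat \<Rightarrow> complex) \<Rightarrow> (nat \<Rightarrow> complex) \<Rightarrow> complex" where
  "form22 b u v = (\<Sum>i<3. \<Sum>j<3. \<Sum>k<3. \<Sum>l<3. b i j k l * u i * u j * v k * v l)"

definition surf :: "(nat \<Rightarrow> nat \<Rightarrow> complex) \<Rightarrow> (nat \<Rightarrow> nat \<Rightarrow> nat \<Rightarrow> nat \<Rightarrow> complex)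
                    \<Rightarrow> ((nat \<Rightarrow> complex) \<times> (nat \<Rightarrow> complex)) set" where
  "surf a b = {(u, v). u \<in> P2 \<and> v \<in> P2 \<and> form11 a u v = 0 \<and> form22 b u v = 0}"

definition du :: "((nat \<Rightarrow> complex) \<Rightarrow> (nat \<Rightarrow> complex) \<Rightarrow> complex) \<Rightarrow> nat
                  \<Rightarrow> (nat \<Rightarrow> complex) \<Rightarrow> (nat \<Rightarrow> complex) \<Rightarrow> complex" where
  "du F m u v = deriv (\<lambda>t. F (u(m := t)) v) (u m)"

definition dv :: "((nat \<Rightarrow> complex) \<Rightarrow> (nat \<Rightarrow> complex) \<Rightarrow> complex) \<Rightarrow> nat
                  \<Rightarrow> (nat \<Rightarrow> complex) \<Rightarrow> (nat \<Rightarrow> complex) \<Rightarrow> complex" where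
  "dv F m u v = deriv (\<lambda>t. F u (v(m := t))) (v m)"

text \<open>Jacobian criterion: S is a smooth complete intersection (of dimension 2) iff at every
point the gradients of the two defining bihomogeneous forms are linearly independent.\<close>
definition smooth_ci :: "(nat \<Rightarrow> nat \<Rightarrow> complex) \<Rightarrow> (nat \<Rightarrow> nat \<Rightarrow> nat \<Rightarrow> nat \<Rightarrow> complex) \<Rightarrow> bool" where
  "smooth_ci a b \<longleftrightarrow> (\<forall>(u, v) \<in> surf a b. \<forall>c1 c2 :: complex.
      (\<forall>m<3. c1 * du (form11 a) m u v + c2 * du (form22 b) m u v = 0) \<and>
      (\<forall>m<3. c1 * dv (form11 a) m u v + c2 * dv (form22 b) m u v = 0)
      \<longrightarrow> c1 = 0 \<and> c2 = 0)"

definition other_pt :: "'a set \<Rightarrow> 'a \<Rightarrow> 'a" where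
  "other_pt A v = (if \<exists>w\<in>A. w \<noteq> v then THE w. w \<in> A \<and> w \<noteq> v else v)"

text \<open>sigma1 is the covering involution of p1 : S \<rightarrow> P^2, (u,v) \<mapsto> u (swap the two points
of the fibre, fixing ramification points); likewise sigma2 for p2.\<close>
definition sigma1 :: "((nat \<Rightarrow> complex) \<times> (nat \<Rightarrow> complex)) set
     \<Rightarrow> (nat \<Rightarrow> complex) \<times> (nat \<Rightarrow> complex) \<Rightarrow> (nat \<Rightarrow> complex) \<times> (nat \<Rightarrow> complex)" where
  "sigma1 S x = (fst x, other_pt {w. (fst x, w) \<in> S} (snd x))"

definition sigma2 :: "((nat \<Rightarrow> complex) \<times> (nat \<Rightarrow> complex)) set
     \<Rightarrow> (nat \<Rightarrow> complex) \<times> (nat \<Rightarrow> complex) \<Rightarrow> (nat \<Rightarrow> complex) \<times> (nat \<Rightarrow> complex)" where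
  "sigma2 S x = (other_pt {w. (w, snd x) \<in> S} (fst x), snd x)"

definition bdd_diff_on :: "'a set \<Rightarrow> ('a \<Rightarrow> real) \<Rightarrow> ('a \<Rightarrow> real) \<Rightarrow> bool" where
  "bdd_diff_on A f g \<longleftrightarrow> (\<exists>C. \<forall>x\<in>A. \<bar>f x - g x\<bar> \<le> C)"

end

theory Submission
  imports Defs
begin

text \<open>Write H, V for Weil heights attached to L1, L2. Since L_i is pulled back from P^2,
  \<sigma>1 fixes H and \<sigma>2 fixes V, and the canonical heights force the relations
  \<sigma>1^* L2 = 4 L1 - L2 and \<sigma>2^* L1 = 4 L2 - L1 at the level of heights, up to O(1).
  With them, hp \<circ> \<sigma>1 - (2 - sqrt 3) hm is bounded and gets multiplied by 7 + 4 sqrt 3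
  under \<sigma>1 \<circ> \<sigma>2, hence vanishes; symmetrically hm \<circ> \<sigma>2 = (2 - sqrt 3) hp.
  Consequently hp + hm - (1 + sqrt 3) hc is bounded and satisfies f \<circ> \<sigma>1 + f \<circ> \<sigma>2 = 4 f,
  hence vanishes too.

  That \<sigma>1 and \<sigma>2 are involutions of S comes from the fact that a line meets a conic in at
  most two points unless it meets it in infinitely many: each fibre of a projection is such an intersection,
  and it is finite by hypothesis.\<close>

section \<open>Algebraic numbers form a field\<close>

definition rat_scale :: "rat \<Rightarrow> complex \<Rightarrow> complex" where
  "rat_scale q z = of_rat q * z"

interpretation rat_vs: vector_space rat_scale
  by unfold_locales (auto simp: rat_scale_def algebra_simps of_rat_add of_rat_mult)

lemma rat_span_mult:
  assumes "s \<in> rat_vs.span X" "t \<in> rat_vs.span Y"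
  shows "s * t \<in> rat_vs.span ((\<lambda>(a, b). a * b) ` (X \<times> Y))"
proof -
  from assms(1) obtain T r where T: "finite T" "T \<subseteq> X" "s = (\<Sum>a\<in>T. rat_scale (r a) a)"
    unfolding rat_vs.span_explicit by blast
  from assms(2) obtain T' r' where T': "finite T'" "T' \<subseteq> Y" "t = (\<Sum>b\<in>T'. rat_scale (r' b) b)"
    unfolding rat_vs.span_explicit by blast
  have "s * t = (\<Sum>a\<in>T. \<Sum>b\<in>T'. rat_scale (r a * r' b) (a * b))"
    unfolding T(3) T'(3) sum_product by (simp add: rat_scale_def of_rat_mult algebra_simps)
  also have "\<dots> \<in> rat_vs.span ((\<lambda>(a, b). a * b) ` (X \<times> Y))"
    using T T' by (intro rat_vs.span_sum rat_vs.span_scale rat_vs.span_base) auto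
  finally show ?thesis .
qed

lemma algebraic_if_powers_in_finite_span:
  assumes B: "finite B" and span: "\<And>k. z ^ k \<in> rat_vs.span B"
  shows "algebraic z"
proof (cases "inj (\<lambda>k. z ^ k)")
  case False
  then obtain i j where ij: "i < j" "z ^ i = z ^ j"
    unfolding inj_def by (metis linorder_neqE_nat)
  show ?thesis
  proof (rule algebraicI)
    let ?p = "monom (1::complex) j - monom 1 i"
    show "coeff ?p k \<in> \<int>" for k by (auto simp: coeff_monom)
    have "coeff ?p j = 1" using ij by (simp add: coeff_monom)
    then show "?p \<noteq> 0" by (metis coeff_0 zero_neq_one)
    show "poly ?p z = 0" using ij by (simp add: poly_monom)
  qed
next
  case inj: True
  \<comment> \<open>card B + 1 distinct powers of z in a span of dimension at most card B are dependent.\<close>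
  define A where "A = (\<lambda>k. z ^ k) ` {..card B}"
  have "card A = Suc (card B)"
    unfolding A_def using inj by (simp add: card_image inj_on_subset)
  moreover have "A \<subseteq> rat_vs.span B" unfolding A_def using span by auto
  ultimately have "rat_vs.dependent A"
    using rat_vs.independent_span_bound[OF B, of A] by auto
  then obtain u where u: "\<exists>v\<in>A. u v \<noteq> 0" "(\<Sum>v\<in>A. rat_scale (u v) v) = 0"
    using rat_vs.dependent_finite[of A] unfolding A_def by auto
  define p where "p = (\<Sum>k\<le>card B. monom (of_rat (u (z ^ k)) :: complex) k)"
  have coeff_p: "coeff p k = (if k \<le> card B then of_rat (u (z ^ k)) else 0)" for k
    unfolding p_def by (simp add: coeff_sum coeff_monom)
  show ?thesis
  proof (rule algebraicI')
    show "coeff p k \<in> \<rat>" for k using coeff_p by auto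
    from u(1) obtain k where "k \<le> card B" "u (z ^ k) \<noteq> 0" unfolding A_def by auto
    then have "coeff p k \<noteq> 0" using coeff_p by simp
    then show "p \<noteq> 0" by auto
    have "poly p z = (\<Sum>k\<le>card B. rat_scale (u (z ^ k)) (z ^ k))"
      unfolding p_def by (simp add: poly_sum poly_monom rat_scale_def)
    also have "\<dots> = (\<Sum>v\<in>A. rat_scale (u v) v)"
      unfolding A_def by (subst sum.reindex) (use inj in \<open>auto intro: inj_on_subset\<close>)
    finally show "poly p z = 0" using u(2) by simp
  qed
qed

lemma algebraic_powers_in_finite_span:
  assumes "algebraic x"
  obtains B where "finite B" "\<And>k. x ^ k \<in> rat_vs.span B"
proof -
  from assms obtain p where p: "\<And>i. coeff p i \<in> \<rat>" "p \<noteq> 0" "poly p x = 0"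
    unfolding algebraic_altdef by blast
  define r where "r i = (SOME q. coeff p i = of_rat q)" for i
  have coeff_p: "coeff p i = of_rat (r i)" for i
    unfolding r_def by (rule someI_ex) (use p(1)[of i] in \<open>auto elim: Rats_cases\<close>)
  define n where "n = degree p"
  have lead: "coeff p n \<noteq> 0" using p(2) unfolding n_def by simp
  have "(\<Sum>i<n. coeff p i * x ^ i) + coeff p n * x ^ n = 0"
    using p(3) unfolding n_def poly_altdef by (simp add: lessThan_Suc_atMost[symmetric])
  then have "x ^ n = - (\<Sum>i<n. coeff p i * x ^ i) / coeff p n"
    using lead by (simp add: field_simps eq_neg_iff_add_eq_0)
  then have top: "x ^ n = (\<Sum>i<n. rat_scale (- r i / r n) (x ^ i))"
    by (simp add: rat_scale_def coeff_p of_rat_divide of_rat_minus sum_divide_distrib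
        sum_negf[symmetric] mult.commute)
  have "x ^ k \<in> rat_vs.span ((\<lambda>i. x ^ i) ` {..<n})" for k
  proof (induction k rule: less_induct)
    case (less k)
    show ?case
    proof (cases "k < n")
      case True then show ?thesis by (intro rat_vs.span_base) auto
    next
      case False
      then have "x ^ k = x ^ (k - n) * x ^ n" by (simp flip: power_add)
      also have "\<dots> = (\<Sum>i<n. rat_scale (- r i / r n) (x ^ (k - n + i)))"
        unfolding top sum_distrib_left by (simp add: rat_scale_def power_add algebra_simps)
      also have "\<dots> \<in> rat_vs.span ((\<lambda>i. x ^ i) ` {..<n})"
        using False by (intro rat_vs.span_sum rat_vs.span_scale less.IH) auto
      finally show ?thesis .
    qed
  qed
  then show ?thesis using that by blast
qed

lemma algebraic_add:
  fixes x y :: complex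
  assumes "algebraic x" "algebraic y"
  shows "algebraic (x + y)"
proof -
  obtain X where X: "finite X" "\<And>k. x ^ k \<in> rat_vs.span X"
    using algebraic_powers_in_finite_span[OF assms(1)] by blast
  obtain Y where Y: "finite Y" "\<And>k. y ^ k \<in> rat_vs.span Y"
    using algebraic_powers_in_finite_span[OF assms(2)] by blast
  show ?thesis
  proof (rule algebraic_if_powers_in_finite_span)
    show "finite ((\<lambda>(a, b). a * b) ` (X \<times> Y))" using X Y by auto
    fix k
    have "(x + y) ^ k = (\<Sum>i\<le>k. rat_scale (of_nat (k choose i)) (x ^ i * y ^ (k - i)))"
      by (simp add: binomial_ring rat_scale_def algebra_simps)
    also have "\<dots> \<in> rat_vs.span ((\<lambda>(a, b). a * b) ` (X \<times> Y))"
      by (intro rat_vs.span_sum rat_vs.span_scale rat_span_mult X Y)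
    finally show "(x + y) ^ k \<in> rat_vs.span ((\<lambda>(a, b). a * b) ` (X \<times> Y))" .
  qed
qed

lemma algebraic_mult:
  fixes x y :: complex
  assumes "algebraic x" "algebraic y"
  shows "algebraic (x * y)"
proof -
  obtain X where X: "finite X" "\<And>k. x ^ k \<in> rat_vs.span X"
    using algebraic_powers_in_finite_span[OF assms(1)] by blast
  obtain Y where Y: "finite Y" "\<And>k. y ^ k \<in> rat_vs.span Y"
    using algebraic_powers_in_finite_span[OF assms(2)] by blast
  show ?thesis
    by (rule algebraic_if_powers_in_finite_span[where B = "(\<lambda>(a, b). a * b) ` (X \<times> Y)"])
      (use X Y in \<open>auto simp: power_mult_distrib intro: rat_span_mult\<close>)
qed

lemma algebraic_sum:
  fixes f :: "'a \<Rightarrow> complex"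
  shows "(\<And>i. i \<in> A \<Longrightarrow> algebraic (f i)) \<Longrightarrow> algebraic (sum f A)"
  by (induction A rule: infinite_finite_induct) (auto intro: algebraic_add)

lemma algebraic_divide:
  fixes x y :: complex
  shows "algebraic x \<Longrightarrow> algebraic y \<Longrightarrow> algebraic (x / y)"
  using algebraic_mult[of x "inverse y"] by (auto simp: divide_inverse)

section \<open>Bounded solutions of expanding functional equations\<close>

lemma bounded_comp_self:
  assumes "bounded (f ` S)" and "\<And>x. x \<in> S \<Longrightarrow> T x \<in> S"
  shows "bounded ((\<lambda>x. f (T x)) ` S)"
  using assms by (elim bounded_subset) auto

lemma bounded_cmult_comp:
  fixes f :: "'a \<Rightarrow> real"
  shows "bounded (f ` S) \<Longrightarrow> bounded ((\<lambda>x. c * f x) ` S)"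
  using bounded_scaleR_comp[of f S c] by simp

lemma bounded_image_cong:
  "bounded (f ` S) \<Longrightarrow> (\<And>x. x \<in> S \<Longrightarrow> g x = f x) \<Longrightarrow> bounded (g ` S)"
  by (metis image_cong)

lemma bounded_contraction_imp_zero:
  fixes g :: "'a \<Rightarrow> real"
  assumes bdd: "bounded (g ` S)" and q: "0 \<le> q" "q < 1"
    and contract: "\<And>C y. (\<forall>x\<in>S. \<bar>g x\<bar> \<le> C) \<Longrightarrow> y \<in> S \<Longrightarrow> \<bar>g y\<bar> \<le> q * C"
    and x: "x \<in> S"
  shows "g x = 0"
proof -
  obtain B where "\<forall>x\<in>S. \<bar>g x\<bar> \<le> B" using bdd unfolding bounded_real by auto
  then have bound: "\<forall>y\<in>S. \<bar>g y\<bar> \<le> q ^ n * B" for n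
    by (induction n) (auto simp: mult.assoc intro: contract)
  have "(\<lambda>n. q ^ n * B) \<longlonglongrightarrow> 0"
    using q by (intro tendsto_mult_left_zero LIMSEQ_power_zero) simp
  then have "\<bar>g x\<bar> \<le> 0"
    using bound x by (intro LIMSEQ_le_const) auto
  then show ?thesis by simp
qed

lemma bounded_eigenfunction_eq_0:
  fixes g :: "'a \<Rightarrow> real"
  assumes "bounded (g ` S)" and T: "\<And>x. x \<in> S \<Longrightarrow> T x \<in> S"
    and eigen: "\<And>x. x \<in> S \<Longrightarrow> g (T x) = l * g x" and l: "\<bar>l\<bar> > 1"
    and "x \<in> S"
  shows "g x = 0"
proof (rule bounded_contraction_imp_zero[where g = g and S = S and q = "1 / \<bar>l\<bar>"])
  fix C y assume C: "\<forall>x\<in>S. \<bar>g x\<bar> \<le> C" and y: "y \<in> S"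
  have "\<bar>l\<bar> * \<bar>g y\<bar> \<le> C" using C T[OF y] eigen[OF y] by (metis abs_mult)
  then show "\<bar>g y\<bar> \<le> 1 / \<bar>l\<bar> * C" using l by (simp add: field_simps)
qed (use assms in auto)

lemma bounded_sum_eigenfunction_eq_0:
  fixes g :: "'a \<Rightarrow> real"
  assumes "bounded (g ` S)" and T: "\<And>x. x \<in> S \<Longrightarrow> T1 x \<in> S" "\<And>x. x \<in> S \<Longrightarrow> T2 x \<in> S"
    and eigen: "\<And>x. x \<in> S \<Longrightarrow> g (T1 x) + g (T2 x) = d * g x" and d: "d > 2"
    and "x \<in> S"
  shows "g x = 0"
proof (rule bounded_contraction_imp_zero[where g = g and S = S and q = "2 / d"])
  fix C y assume C: "\<forall>x\<in>S. \<bar>g x\<bar> \<le> C" and y: "y \<in> S"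
  have "\<bar>g (T1 y)\<bar> \<le> C" "\<bar>g (T2 y)\<bar> \<le> C" using C T y by auto
  then have "d * \<bar>g y\<bar> \<le> 2 * C" using eigen[OF y] d by (simp add: abs_mult flip: eigen)
  then show "\<bar>g y\<bar> \<le> 2 / d * C" using d by (simp add: field_simps)
qed (use assms in auto)

section \<open>Canonical heights for a pair of involutions\<close>

text \<open>H and V stand for Weil heights of L1 and L2, and hp, hm, hc for the canonical heights of
  E+, E- and L. The number \<alpha> = 2 + sqrt 3 enters only as the root > 1 of t^2 - 4 t + 1, so
  that 4 - \<alpha> = 1 / \<alpha> = 2 - sqrt 3.\<close>

locale double_cover_heights =
  fixes S :: "'a set" and s1 s2 :: "'a \<Rightarrow> 'a" and H V :: "'a \<Rightarrow> real" and \<alpha> :: real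
    and hp hm hc :: "'a \<Rightarrow> real"
  assumes s1_in: "x \<in> S \<Longrightarrow> s1 x \<in> S" and s2_in: "x \<in> S \<Longrightarrow> s2 x \<in> S"
    and s1_s1: "x \<in> S \<Longrightarrow> s1 (s1 x) = x" and s2_s2: "x \<in> S \<Longrightarrow> s2 (s2 x) = x"
    and H_s1: "x \<in> S \<Longrightarrow> H (s1 x) = H x" and V_s2: "x \<in> S \<Longrightarrow> V (s2 x) = V x"
    and alpha_gt_1: "\<alpha> > 1" and alpha_root: "\<alpha>\<^sup>2 - 4 * \<alpha> + 1 = 0"
    and hp_approx: "bounded ((\<lambda>x. hp x - (\<alpha> * H x - V x)) ` S)"
    and hp_eq: "x \<in> S \<Longrightarrow> hp (s2 (s1 x)) = \<alpha>\<^sup>2 * hp x"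
    and hm_approx: "bounded ((\<lambda>x. hm x - (\<alpha> * V x - H x)) ` S)"
    and hm_eq: "x \<in> S \<Longrightarrow> hm (s1 (s2 x)) = \<alpha>\<^sup>2 * hm x"
    and hc_approx: "bounded ((\<lambda>x. hc x - (H x + V x)) ` S)"
    and hc_eq: "x \<in> S \<Longrightarrow> hc (s1 x) + hc (s2 x) = 4 * hc x"
begin

lemma swapped: "double_cover_heights S s2 s1 V H \<alpha> hm hp hc"
  using s1_in s2_in s1_s1 s2_s2 H_s1 V_s2 alpha_gt_1 alpha_root hp_approx hp_eq hm_approx hm_eq
    hc_approx hc_eq
  by unfold_locales (simp_all add: add.commute)

lemma hp_s2: "x \<in> S \<Longrightarrow> hp (s2 x) = \<alpha>\<^sup>2 * hp (s1 x)"
  using hp_eq[OF s1_in] s1_s1 by simp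

lemma pullback_sum_bounded:
  "bounded ((\<lambda>x. (V (s1 x) + V x - 4 * H x) + (H (s2 x) + H x - 4 * V x)) ` S)"
proof -
  define e where "e x = hc x - (H x + V x)" for x
  have e: "bounded (e ` S)" using hc_approx unfolding e_def .
  have "bounded ((\<lambda>x. 4 * e x - e (s1 x) - e (s2 x)) ` S)"
    by (intro bounded_minus_comp bounded_cmult_comp e bounded_comp_self[OF e] s1_in s2_in)
  then show ?thesis
  proof (rule bounded_image_cong)
    fix x assume "x \<in> S"
    then show "(V (s1 x) + V x - 4 * H x) + (H (s2 x) + H x - 4 * V x)
        = 4 * e x - e (s1 x) - e (s2 x)"
      using hc_eq H_s1 V_s2 unfolding e_def by (simp add: algebra_simps)
  qed
qed

text \<open>The height-level form of the relation \<sigma>1^* L2 = 4 L1 - L2 in Pic(S).\<close>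
lemma pullback_s1_bounded: "bounded ((\<lambda>x. V (s1 x) + V x - 4 * H x) ` S)"
proof -
  define e where "e x = hp x - (\<alpha> * H x - V x)" for x
  define D1 where "D1 x = V (s1 x) + V x - 4 * H x" for x
  define D2 where "D2 x = H (s2 x) + H x - 4 * V x" for x
  have e: "bounded (e ` S)" using hp_approx unfolding e_def .
  have D: "bounded ((\<lambda>x. D1 x + D2 x) ` S)" using pullback_sum_bounded unfolding D1_def D2_def .
  have "bounded ((\<lambda>x. \<alpha>\<^sup>2 * e x - e (s2 (s1 x)) - \<alpha> * (D1 (s1 x) + D2 (s1 x))) ` S)"
    by (intro bounded_minus_comp bounded_cmult_comp e bounded_comp_self[OF e]
        bounded_comp_self[OF D] s1_in s2_in)
  then have "bounded ((\<lambda>x. 1 / (\<alpha>\<^sup>2 - \<alpha>) * (\<alpha>\<^sup>2 * e x - e (s2 (s1 x))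
      - \<alpha> * (D1 (s1 x) + D2 (s1 x)))) ` S)"
    by (rule bounded_cmult_comp)
  then show ?thesis
  proof (rule bounded_image_cong)
    fix x assume x: "x \<in> S"
    have "\<alpha>\<^sup>2 * e x - e (s2 (s1 x)) - \<alpha> * (D1 (s1 x) + D2 (s1 x))
        = (\<alpha>\<^sup>2 - \<alpha>) * D1 x - (\<alpha>\<^sup>2 - 4 * \<alpha> + 1) * (V (s1 x) + \<alpha> * H x)"
      using hp_eq[OF x] V_s2[OF s1_in[OF x]] H_s1[OF x] s1_s1[OF x]
      unfolding e_def D1_def D2_def by (simp add: algebra_simps power2_eq_square)
    moreover have "\<alpha>\<^sup>2 - \<alpha> \<noteq> 0" using alpha_gt_1 by (simp add: power2_eq_square)
    ultimately show "V (s1 x) + V x - 4 * H x = 1 / (\<alpha>\<^sup>2 - \<alpha>) * (\<alpha>\<^sup>2 * e x - e (s2 (s1 x))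
        - \<alpha> * (D1 (s1 x) + D2 (s1 x)))"
      unfolding alpha_root D1_def by (simp add: field_simps)
  qed
qed

lemma hp_s1: "x \<in> S \<Longrightarrow> hp (s1 x) = (4 - \<alpha>) * hm x"
proof -
  define g where "g x = hp (s1 x) - (4 - \<alpha>) * hm x" for x
  have "bounded ((\<lambda>x. (hp (s1 x) - (\<alpha> * H (s1 x) - V (s1 x))) - (4 - \<alpha>) * (hm x - (\<alpha> * V x - H x))
      - (V (s1 x) + V x - 4 * H x)) ` S)"
    by (intro bounded_minus_comp bounded_cmult_comp bounded_comp_self[OF hp_approx s1_in]
        hm_approx pullback_s1_bounded)
  then have bdd: "bounded (g ` S)"
  proof (rule bounded_image_cong)
    fix x assume "x \<in> S"
    then have "g x = (hp (s1 x) - (\<alpha> * H (s1 x) - V (s1 x))) - (4 - \<alpha>) * (hm x - (\<alpha> * V x - H x))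
        - (V (s1 x) + V x - 4 * H x) + (\<alpha>\<^sup>2 - 4 * \<alpha> + 1) * V x"
      using H_s1 unfolding g_def by (simp add: algebra_simps power2_eq_square)
    then show "g x = (hp (s1 x) - (\<alpha> * H (s1 x) - V (s1 x))) - (4 - \<alpha>) * (hm x - (\<alpha> * V x - H x))
        - (V (s1 x) + V x - 4 * H x)"
      unfolding alpha_root by simp
  qed
  have eigen: "g (s1 (s2 x)) = \<alpha>\<^sup>2 * g x" if "x \<in> S" for x
    using hp_s2 hm_eq s1_s1 s2_in that unfolding g_def by (simp add: algebra_simps)
  have l: "\<bar>\<alpha>\<^sup>2\<bar> > 1" using alpha_gt_1 by (simp add: one_less_power)
  have "g x = 0" if "x \<in> S"
    by (rule bounded_eigenfunction_eq_0[OF bdd _ eigen l that]) (simp_all add: s1_in s2_in)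
  then show "x \<in> S \<Longrightarrow> hp (s1 x) = (4 - \<alpha>) * hm x" unfolding g_def by simp
qed

lemma hp_s1_add_hp_s2: "x \<in> S \<Longrightarrow> hp (s1 x) + hp (s2 x) = 4 * hm x"
proof -
  assume x: "x \<in> S"
  have "hp (s1 x) + hp (s2 x) = (1 + \<alpha>\<^sup>2) * hp (s1 x)"
    using hp_s2[OF x] by (simp add: algebra_simps)
  also have "\<dots> = (1 + \<alpha>\<^sup>2) * (4 - \<alpha>) * hm x"
    using hp_s1[OF x] by simp
  also have "\<dots> = (4 - \<alpha> * (\<alpha>\<^sup>2 - 4 * \<alpha> + 1)) * hm x"
    by (simp add: algebra_simps power2_eq_square)
  finally show ?thesis unfolding alpha_root by simp
qed

theorem hp_add_hm: "x \<in> S \<Longrightarrow> hp x + hm x = (\<alpha> - 1) * hc x"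
proof -
  define g where "g x = hp x + hm x - (\<alpha> - 1) * hc x" for x
  have "bounded ((\<lambda>x. (hp x - (\<alpha> * H x - V x)) + (hm x - (\<alpha> * V x - H x))
      - (\<alpha> - 1) * (hc x - (H x + V x))) ` S)"
    by (intro bounded_plus_comp bounded_minus_comp bounded_cmult_comp hp_approx hm_approx hc_approx)
  then have bdd: "bounded (g ` S)"
    by (rule bounded_image_cong) (simp add: g_def algebra_simps)
  have eigen: "g (s1 x) + g (s2 x) = 4 * g x" if "x \<in> S" for x
  proof -
    have "g (s1 x) + g (s2 x) - 4 * g x = (hp (s1 x) + hp (s2 x) - 4 * hm x)
        + (hm (s2 x) + hm (s1 x) - 4 * hp x) - (\<alpha> - 1) * (hc (s1 x) + hc (s2 x) - 4 * hc x)"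
      unfolding g_def by (simp add: algebra_simps)
    then show ?thesis
      using hp_s1_add_hp_s2[OF that] double_cover_heights.hp_s1_add_hp_s2[OF swapped that]
        hc_eq[OF that] by simp
  qed
  have "g x = 0" if "x \<in> S"
    by (rule bounded_sum_eigenfunction_eq_0[OF bdd s1_in s2_in eigen _ that]) simp_all
  then show "x \<in> S \<Longrightarrow> hp x + hm x = (\<alpha> - 1) * hc x" unfolding g_def by simp
qed

end

section \<open>Lines meeting conics in the projective plane\<close>

definition linear_form :: "(nat \<Rightarrow> complex) \<Rightarrow> (nat \<Rightarrow> complex) \<Rightarrow> complex" where
  "linear_form c w = (\<Sum>j<3. c j * w j)"

definition quadratic_form :: "(nat \<Rightarrow> nat \<Rightarrow> complex) \<Rightarrow> (nat \<Rightarrow> complex) \<Rightarrow> complex" where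
  "quadratic_form d w = (\<Sum>k<3. \<Sum>l<3. d k l * w k * w l)"

definition polar_form ::
    "(nat \<Rightarrow> nat \<Rightarrow> complex) \<Rightarrow> (nat \<Rightarrow> complex) \<Rightarrow> (nat \<Rightarrow> complex) \<Rightarrow> complex" where
  "polar_form d v w = (\<Sum>k<3. \<Sum>l<3. d k l * (v k * w l + w k * v l))"

lemma sum_lessThan_3: "(\<Sum>i<(3::nat). f i) = f 0 + f 1 + f 2"
  by (simp add: numeral_3_eq_3 numeral_2_eq_2 lessThan_Suc add_ac)

lemma linear_form_lincomb:
  "linear_form c (\<lambda>i. \<alpha> * v i + \<beta> * w i) = \<alpha> * linear_form c v + \<beta> * linear_form c w"
  unfolding linear_form_def sum_lessThan_3 by algebra

lemma quadratic_form_lincomb: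
  "quadratic_form d (\<lambda>i. \<alpha> * v i + \<beta> * w i)
    = \<alpha>\<^sup>2 * quadratic_form d v + \<alpha> * \<beta> * polar_form d v w + \<beta>\<^sup>2 * quadratic_form d w"
  unfolding quadratic_form_def polar_form_def sum_lessThan_3 by (simp add: power2_eq_square) algebra

lemma polar_form_lincomb_right:
  "polar_form d u (\<lambda>i. \<alpha> * v i + \<beta> * w i) = \<alpha> * polar_form d u v + \<beta> * polar_form d u w"
  unfolding polar_form_def sum_lessThan_3 by algebra

lemma linear_form_scale: "linear_form c (\<lambda>i. k * w i) = k * linear_form c w"
  unfolding linear_form_def sum_lessThan_3 by algebra

lemma quadratic_form_scale: "quadratic_form d (\<lambda>i. k * w i) = k\<^sup>2 * quadratic_form d w"
  unfolding quadratic_form_def sum_lessThan_3 by (simp add: power2_eq_square) algebra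

lemma P2D:
  assumes "p \<in> P2"
  shows "\<forall>i\<ge>3. p i = 0" "\<forall>i<3. algebraic (p i)" "\<exists>j<3. p j = 1 \<and> (\<forall>i<j. p i = 0)"
  using assms unfolding P2_def by auto

lemma P2_proportional_eq:
  assumes p: "p \<in> P2" and q: "q \<in> P2" and k: "\<forall>i<3. q i = k * p i"
  shows "p = q"
proof -
  obtain j where j: "j < 3" "p j = 1" "\<forall>i<j. p i = 0" using P2D(3)[OF p] by blast
  obtain j' where j': "j' < 3" "q j' = 1" "\<forall>i<j'. q i = 0" using P2D(3)[OF q] by blast
  have "j = j'"
  proof (rule ccontr)
    assume "j \<noteq> j'"
    then consider "j < j'" | "j' < j" by linarith
    then show False
    proof cases
      case 1
      then show False using k j j' by force
    next
      case 2
      then show False using k j j' by force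
    qed
  qed
  then have "k = 1" using k j j' by auto
  show "p = q"
  proof
    fix i show "p i = q i"
      using \<open>k = 1\<close> k P2D(1)[OF p] P2D(1)[OF q] by (cases "i < 3") auto
  qed
qed

lemma P2_independent:
  assumes p: "p \<in> P2" and q: "q \<in> P2" and "p \<noteq> q"
    and rel: "\<forall>i<3. \<alpha> * p i + \<beta> * q i = 0"
  shows "\<alpha> = 0 \<and> \<beta> = 0"
proof -
  have "\<beta> = 0"
  proof (rule ccontr)
    assume "\<beta> \<noteq> 0"
    then have "\<forall>i<3. q i = (- \<alpha> / \<beta>) * p i"
      using rel by (auto simp: field_simps eq_neg_iff_add_eq_0 add.commute)
    then show False using P2_proportional_eq[OF p q] \<open>p \<noteq> q\<close> by blast
  qed
  moreover obtain j where "j < 3" "p j = 1" using P2D(3)[OF p] by blast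
  ultimately show ?thesis using rel by force
qed

definition nonzero_alg_vector :: "(nat \<Rightarrow> complex) \<Rightarrow> bool" where
  "nonzero_alg_vector w \<longleftrightarrow> (\<forall>i\<ge>3. w i = 0) \<and> (\<exists>i<3. w i \<noteq> 0) \<and> (\<forall>i<3. algebraic (w i))"

definition proj_point :: "(nat \<Rightarrow> complex) \<Rightarrow> nat \<Rightarrow> complex" where
  "proj_point w = (\<lambda>i. w i / w (LEAST j. w j \<noteq> 0))"

lemma proj_point:
  assumes "nonzero_alg_vector w"
  shows proj_point_in_P2: "proj_point w \<in> P2"
    and proj_point_scale: "\<exists>k. k \<noteq> 0 \<and> proj_point w = (\<lambda>i. k * w i)"
proof -
  define j where "j = (LEAST j. w j \<noteq> 0)"
  obtain i0 where i0: "i0 < 3" "w i0 \<noteq> 0" using assms unfolding nonzero_alg_vector_def by blast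
  have wj: "w j \<noteq> 0" unfolding j_def by (rule LeastI[of _ i0]) (rule i0(2))
  have j3: "j < 3" using Least_le[of "\<lambda>j. w j \<noteq> 0" i0] i0 unfolding j_def by linarith
  have below_j: "\<forall>i<j. w i = 0" unfolding j_def using not_less_Least by blast
  have pw: "proj_point w = (\<lambda>i. w i / w j)" unfolding proj_point_def j_def ..
  show "\<exists>k. k \<noteq> 0 \<and> proj_point w = (\<lambda>i. k * w i)"
    using wj by (intro exI[of _ "inverse (w j)"]) (simp add: pw divide_inverse mult.commute)
  show "proj_point w \<in> P2"
    unfolding P2_def pw using assms wj j3 below_j unfolding nonzero_alg_vector_def
    by (auto intro!: algebraic_divide exI[of _ j])
qed

lemma proj_point_eq_imp_proportional:
  assumes "nonzero_alg_vector w" "nonzero_alg_vector w'" "proj_point w = proj_point w'"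
  shows "\<exists>k. \<forall>i. w i = k * w' i"
proof -
  obtain k where k: "k \<noteq> 0" "proj_point w = (\<lambda>i. k * w i)"
    using proj_point_scale[OF assms(1)] by blast
  obtain k' where k': "proj_point w' = (\<lambda>i. k' * w' i)"
    using proj_point_scale[OF assms(2)] by blast
  have "w i = k' / k * w' i" for i
    using k k' assms(3) by (metis nonzero_mult_div_cancel_left times_divide_eq_left)
  then show ?thesis by blast
qed

definition line_conic_section ::
    "(nat \<Rightarrow> complex) \<Rightarrow> (nat \<Rightarrow> nat \<Rightarrow> complex) \<Rightarrow> (nat \<Rightarrow> complex) set" where
  "line_conic_section c d = {w \<in> P2. linear_form c w = 0 \<and> quadratic_form d w = 0}"

lemma line_conic_sectionD:
  assumes "w \<in> line_conic_section c d"
  shows "w \<in> P2" "linear_form c w = 0" "quadratic_form d w = 0"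
  using assms unfolding line_conic_section_def by auto

lemma proj_point_in_line_conic_section:
  assumes "nonzero_alg_vector w" "linear_form c w = 0" "quadratic_form d w = 0"
  shows "proj_point w \<in> line_conic_section c d"
proof -
  obtain k where "proj_point w = (\<lambda>i. k * w i)" using proj_point_scale[OF assms(1)] by blast
  then show ?thesis unfolding line_conic_section_def using proj_point_in_P2[OF assms(1)] assms(2,3)
    by (simp add: linear_form_scale quadratic_form_scale)
qed

lemma infinite_line_conic_section_if_family:
  assumes T: "infinite T"
    and vec: "\<And>s. s \<in> T \<Longrightarrow> nonzero_alg_vector (f s)"
    and on_line: "\<And>s. s \<in> T \<Longrightarrow> linear_form c (f s) = 0"
    and on_conic: "\<And>s. s \<in> T \<Longrightarrow> quadratic_form d (f s) = 0"
    and non_proportional: "\<And>s t k. s \<in> T \<Longrightarrow> t \<in> T \<Longrightarrow> \<forall>i. f s i = k * f t i \<Longrightarrow> s = t"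
  shows "infinite (line_conic_section c d)"
proof
  assume fin: "finite (line_conic_section c d)"
  have "inj_on (\<lambda>s. proj_point (f s)) T"
    by (rule inj_onI) (use vec non_proportional proj_point_eq_imp_proportional in blast)
  moreover have "(\<lambda>s. proj_point (f s)) ` T \<subseteq> line_conic_section c d"
    using proj_point_in_line_conic_section vec on_line on_conic by blast
  ultimately show False using T fin by (metis finite_imageD finite_subset)
qed

lemma algebraic_polar_form:
  assumes "\<forall>k<3. \<forall>l<3. algebraic (d k l)" "v \<in> P2" "w \<in> P2"
  shows "algebraic (polar_form d v w)"
  using assms P2D(2)[OF assms(2)] P2D(2)[OF assms(3)] unfolding polar_form_def
  by (intro algebraic_sum algebraic_mult algebraic_add) auto

text \<open>The whole line through v1 and v2 then lies on the conic.\<close>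
lemma infinite_line_conic_section_if_polar_form_eq_0:
  assumes v1: "v1 \<in> line_conic_section c d" and v2: "v2 \<in> line_conic_section c d"
    and "v1 \<noteq> v2" and polar: "polar_form d v1 v2 = 0"
  shows "infinite (line_conic_section c d)"
proof (rule infinite_line_conic_section_if_family[where T = UNIV])
  note p = line_conic_sectionD[OF v1] line_conic_sectionD[OF v2]
  define f where "f t = (\<lambda>i. 1 * v1 i + of_nat t * v2 i)" for t :: nat
  show "infinite (UNIV :: nat set)" by simp
  show "nonzero_alg_vector (f t)" for t
  proof -
    have "algebraic (f t i)" if "i < 3" for i
      unfolding f_def using P2D(2)[OF p(1)] P2D(2)[OF p(4)] that
      by (intro algebraic_add algebraic_mult) auto
    moreover have "\<exists>i<3. f t i \<noteq> 0"
      using P2_independent[OF p(1) p(4) \<open>v1 \<noteq> v2\<close>, of 1 "of_nat t"] unfolding f_def by auto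
    ultimately show ?thesis
      unfolding nonzero_alg_vector_def using P2D(1)[OF p(1)] P2D(1)[OF p(4)] by (simp add: f_def)
  qed
  show "linear_form c (f t) = 0" for t unfolding f_def linear_form_lincomb using p by simp
  show "quadratic_form d (f t) = 0" for t
    unfolding f_def quadratic_form_lincomb using p polar by simp
  show "s = t" if "\<forall>i. f s i = k * f t i" for s t k
  proof -
    have "\<forall>i<3. (1 - k) * v1 i + (of_nat s - k * of_nat t) * v2 i = 0"
      using that unfolding f_def by (auto simp: algebra_simps)
    then have "1 - k = 0 \<and> of_nat s - k * of_nat t = (0 :: complex)"
      by (rule P2_independent[OF p(1) p(4) \<open>v1 \<noteq> v2\<close>])
    then show "s = t" by auto
  qed
qed

lemma polar_form_eq_0_if_dependent:
  assumes v1: "v1 \<in> line_conic_section c d" and v2: "v2 \<in> line_conic_section c d"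
    and v3: "v3 \<in> line_conic_section c d"
    and distinct: "v1 \<noteq> v2" "v1 \<noteq> v3" "v2 \<noteq> v3"
    and nontrivial: "\<alpha> \<noteq> 0 \<or> \<beta> \<noteq> 0 \<or> \<gamma> \<noteq> 0"
    and rel: "\<forall>i<3. \<alpha> * v1 i + \<beta> * v2 i + \<gamma> * v3 i = 0"
  shows "polar_form d v1 v2 = 0"
proof -
  note p = line_conic_sectionD[OF v1] line_conic_sectionD[OF v2] line_conic_sectionD[OF v3]
  have "\<gamma> \<noteq> 0"
  proof
    assume "\<gamma> = 0"
    then have "\<forall>i<3. \<alpha> * v1 i + \<beta> * v2 i = 0" using rel by simp
    then have "\<alpha> = 0 \<and> \<beta> = 0" by (rule P2_independent[OF p(1) p(4) distinct(1)])
    then show False using nontrivial \<open>\<gamma> = 0\<close> by simp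
  qed
  define a where "a = - \<alpha> / \<gamma>"
  define b where "b = - \<beta> / \<gamma>"
  have v3_eq: "v3 = (\<lambda>i. a * v1 i + b * v2 i)"
  proof
    fix i show "v3 i = a * v1 i + b * v2 i"
    proof (cases "i < 3")
      case True
      then have "\<alpha> * v1 i + \<beta> * v2 i + \<gamma> * v3 i = 0" using rel by blast
      then have "\<gamma> * v3 i = - \<alpha> * v1 i - \<beta> * v2 i" by algebra
      then show ?thesis using \<open>\<gamma> \<noteq> 0\<close> unfolding a_def b_def by (simp add: field_simps)
    next
      case False
      then show ?thesis using P2D(1)[OF p(1)] P2D(1)[OF p(4)] P2D(1)[OF p(7)] by simp
    qed
  qed
  have "a * b * polar_form d v1 v2 = quadratic_form d v3"
    unfolding v3_eq quadratic_form_lincomb using p by simp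
  moreover have "a \<noteq> 0"
  proof
    assume "a = 0"
    then have "\<forall>i<3. v3 i = b * v2 i" by (simp add: v3_eq)
    then show False using P2_proportional_eq[OF p(4) p(7)] distinct(3) by blast
  qed
  moreover have "b \<noteq> 0"
  proof
    assume "b = 0"
    then have "\<forall>i<3. v3 i = a * v1 i" by (simp add: v3_eq)
    then show False using P2_proportional_eq[OF p(1) p(7)] distinct(2) by blast
  qed
  ultimately show ?thesis using p(9) by simp
qed

text \<open>For three independent points the line is the whole plane. Each line through v1 and a point
  w of the line through v2 and v3 meets the conic again in
  quadratic_form d w * v1 - polar_form d v1 w * w.\<close>
lemma infinite_line_conic_section_if_independent:
  assumes v1: "v1 \<in> line_conic_section c d" and v2: "v2 \<in> line_conic_section c d"
    and v3: "v3 \<in> line_conic_section c d"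
    and indep: "\<And>\<alpha> \<beta> \<gamma>. \<forall>i<3. \<alpha> * v1 i + \<beta> * v2 i + \<gamma> * v3 i = 0 \<Longrightarrow> \<alpha> = 0 \<and> \<beta> = 0 \<and> \<gamma> = 0"
    and alg: "\<forall>k<3. \<forall>l<3. algebraic (d k l)"
    and polar13: "polar_form d v1 v3 \<noteq> 0"
  shows "infinite (line_conic_section c d)"
proof -
  note p = line_conic_sectionD[OF v1] line_conic_sectionD[OF v2] line_conic_sectionD[OF v3]
  define B12 B13 B23 where "B12 = polar_form d v1 v2" and "B13 = polar_form d v1 v3"
    and "B23 = polar_form d v2 v3"
  define X where "X s = B12 + of_nat s * B13" for s :: nat
  define w where "w s = (\<lambda>i. 1 * v2 i + of_nat s * v3 i)" for s :: nat
  define f where "f s = (\<lambda>i. (of_nat s * B23) * v1 i + (- X s) * w s i)" for s :: nat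
  have f_eq: "f s i = (of_nat s * B23) * v1 i + (- X s) * v2 i + (- X s * of_nat s) * v3 i" for s i
    unfolding f_def w_def by (simp add: algebra_simps)
  have quadratic_w: "quadratic_form d (w s) = of_nat s * B23" for s
    unfolding w_def quadratic_form_lincomb B23_def using p by simp
  have polar_w: "polar_form d v1 (w s) = X s" for s
    unfolding w_def X_def B12_def B13_def polar_form_lincomb_right by simp
  show ?thesis
  proof (rule infinite_line_conic_section_if_family[where T = "{s. X s \<noteq> 0}" and f = f])
    have "inj X" unfolding X_def using polar13 B13_def by (auto intro!: injI)
    then have "finite {s. X s = 0}" using finite_vimageI[of "{0}" X] by (simp add: vimage_def)
    then show "infinite {s. X s \<noteq> 0}"
      using Diff_infinite_finite[of "{s. X s = 0}" UNIV] by (simp add: set_diff_eq)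
    show "nonzero_alg_vector (f s)" if "s \<in> {s. X s \<noteq> 0}" for s
    proof -
      have "\<exists>i<3. f s i \<noteq> 0" using indep[of "of_nat s * B23" "- X s" "- X s * of_nat s"] that
        unfolding f_eq by auto
      moreover have "algebraic (f s i)" if "i < 3" for i
      proof -
        have "algebraic B12" "algebraic B13" "algebraic B23"
          unfolding B12_def B13_def B23_def using algebraic_polar_form alg p by auto
        then show ?thesis
          unfolding f_eq X_def using P2D(2)[OF p(1)] P2D(2)[OF p(4)] P2D(2)[OF p(7)] that
          by (intro algebraic_add algebraic_mult algebraic_minus) auto
      qed
      ultimately show ?thesis
        unfolding nonzero_alg_vector_def using P2D(1)[OF p(1)] P2D(1)[OF p(4)] P2D(1)[OF p(7)]
        by (simp add: f_eq)
    qed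
    show "linear_form c (f s) = 0" for s
      unfolding f_def w_def linear_form_lincomb using p by simp
    show "quadratic_form d (f s) = 0" for s
      unfolding f_def quadratic_form_lincomb quadratic_w polar_w using p
      by (simp add: power2_eq_square)
    show "s = t" if "s \<in> {s. X s \<noteq> 0}" "t \<in> {s. X s \<noteq> 0}" "\<forall>i. f s i = k * f t i" for s t k
    proof -
      have "\<forall>i<3. (of_nat s * B23 - k * (of_nat t * B23)) * v1 i + (- X s + k * X t) * v2 i
          + (- X s * of_nat s + k * (X t * of_nat t)) * v3 i = 0"
        using that(3) unfolding f_eq by (auto simp: algebra_simps)
      then have "- X s + k * X t = 0" "- X s * of_nat s + k * (X t * of_nat t) = 0"
        using indep by blast+
      then have "X s * (of_nat s - of_nat t) = 0" by algebra
      then show "s = t" using that(1) by simp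
    qed
  qed
qed

lemma line_conic_section_at_most_two:
  assumes fin: "finite (line_conic_section c d)" and alg: "\<forall>k<3. \<forall>l<3. algebraic (d k l)"
    and v1: "v1 \<in> line_conic_section c d" and v2: "v2 \<in> line_conic_section c d"
    and v3: "v3 \<in> line_conic_section c d"
  shows "v1 = v2 \<or> v1 = v3 \<or> v2 = v3"
proof (rule ccontr)
  assume "\<not> ?thesis"
  then have distinct: "v1 \<noteq> v2" "v1 \<noteq> v3" "v2 \<noteq> v3" by auto
  have "polar_form d v1 v2 \<noteq> 0" "polar_form d v1 v3 \<noteq> 0"
    using infinite_line_conic_section_if_polar_form_eq_0 fin v1 v2 v3 distinct by blast+
  then consider (dependent) \<alpha> \<beta> \<gamma> where "\<alpha> \<noteq> 0 \<or> \<beta> \<noteq> 0 \<or> \<gamma> \<noteq> 0"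
      "\<forall>i<3. \<alpha> * v1 i + \<beta> * v2 i + \<gamma> * v3 i = 0"
    | (independent) "\<And>\<alpha> \<beta> \<gamma>. \<forall>i<3. \<alpha> * v1 i + \<beta> * v2 i + \<gamma> * v3 i = 0 \<Longrightarrow> \<alpha> = 0 \<and> \<beta> = 0 \<and> \<gamma> = 0"
    by blast
  then show False
  proof cases
    case dependent
    then show False
      using polar_form_eq_0_if_dependent[OF v1 v2 v3 distinct] \<open>polar_form d v1 v2 \<noteq> 0\<close> by blast
  next
    case independent
    then show False
      using infinite_line_conic_section_if_independent[OF v1 v2 v3 _ alg] fin
        \<open>polar_form d v1 v3 \<noteq> 0\<close> by blast
  qed
qed

section \<open>The covering involutions\<close>

lemma surf_fibre_fst:
  assumes "u \<in> P2"
  shows "{v. (u, v) \<in> surf a b} = line_conic_section (\<lambda>j. \<Sum>i<3. a i j * u i)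
    (\<lambda>k l. \<Sum>i<3. \<Sum>j<3. b i j k l * u i * u j)"
proof -
  have "form11 a u v = linear_form (\<lambda>j. \<Sum>i<3. a i j * u i) v"
    and "form22 b u v = quadratic_form (\<lambda>k l. \<Sum>i<3. \<Sum>j<3. b i j k l * u i * u j) v" for v
    unfolding form11_def form22_def linear_form_def quadratic_form_def sum_lessThan_3 by algebra+
  then show ?thesis using assms unfolding surf_def line_conic_section_def by auto
qed

lemma surf_fibre_snd:
  assumes "v \<in> P2"
  shows "{u. (u, v) \<in> surf a b} = line_conic_section (\<lambda>i. \<Sum>j<3. a i j * v j)
    (\<lambda>i j. \<Sum>k<3. \<Sum>l<3. b i j k l * v k * v l)"
proof -
  have "form11 a u v = linear_form (\<lambda>i. \<Sum>j<3. a i j * v j) u"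
    and "form22 b u v = quadratic_form (\<lambda>i j. \<Sum>k<3. \<Sum>l<3. b i j k l * v k * v l) u" for u
    unfolding form11_def form22_def linear_form_def quadratic_form_def sum_lessThan_3 by algebra+
  then show ?thesis using assms unfolding surf_def line_conic_section_def by auto
qed

lemma other_pt_involution:
  assumes v: "v \<in> A"
    and at_most_two: "\<And>x y z. x \<in> A \<Longrightarrow> y \<in> A \<Longrightarrow> z \<in> A \<Longrightarrow> x = y \<or> x = z \<or> y = z"
  shows "other_pt A v \<in> A \<and> other_pt A (other_pt A v) = v"
proof (cases "\<exists>w\<in>A. w \<noteq> v")
  case True
  then obtain w where w: "w \<in> A" "w \<noteq> v" by blast
  have other: "other_pt A x = y" if "x \<in> A" "y \<in> A" "x \<noteq> y" for x y
  proof -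
    have "(THE z. z \<in> A \<and> z \<noteq> x) = y"
    proof (rule the_equality)
      show "y \<in> A \<and> y \<noteq> x" using that by simp
      show "z = y" if "z \<in> A \<and> z \<noteq> x" for z
        using at_most_two[of x y z] \<open>x \<in> A\<close> \<open>y \<in> A\<close> \<open>x \<noteq> y\<close> that by blast
    qed
    moreover have "\<exists>w\<in>A. w \<noteq> x" using that by (intro bexI[of _ y]) auto
    ultimately show ?thesis unfolding other_pt_def by simp
  qed
  have "other_pt A v = w" by (rule other) (use v w in auto)
  moreover have "other_pt A w = v" by (rule other) (use v w in auto)
  ultimately show ?thesis using w by simp
next
  case False
  then have "other_pt A v = v" unfolding other_pt_def by simp
  then show ?thesis using v by simp
qed

lemma algebraic_quadratic_form:
  assumes "\<forall>i<3. \<forall>j<3. algebraic (d i j)" "u \<in> P2"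
  shows "algebraic (quadratic_form d u)"
  unfolding quadratic_form_def using assms P2D(2)[OF assms(2)]
  by (intro algebraic_sum algebraic_mult) auto

lemma sigma1_involution:
  assumes alg: "\<forall>i<3. \<forall>j<3. \<forall>k<3. \<forall>l<3. algebraic (b i j k l)"
    and fin: "\<forall>u\<in>P2. finite {v. (u, v) \<in> surf a b}" and x: "x \<in> surf a b"
  shows "sigma1 (surf a b) x \<in> surf a b \<and> sigma1 (surf a b) (sigma1 (surf a b) x) = x
    \<and> fst (sigma1 (surf a b) x) = fst x"
proof -
  obtain u v where x_eq: "x = (u, v)" by fastforce
  define A where "A = {w. (u, w) \<in> surf a b}"
  have u: "u \<in> P2" and "v \<in> A" using x unfolding x_eq A_def surf_def by auto
  have coeffs_alg: "\<forall>k<3. \<forall>l<3. algebraic (\<Sum>i<3. \<Sum>j<3. b i j k l * u i * u j)"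
    using algebraic_quadratic_form[OF _ u] alg unfolding quadratic_form_def by simp
  have "finite A" using fin u unfolding A_def by blast
  then have "y = z \<or> y = w \<or> z = w" if "y \<in> A" "z \<in> A" "w \<in> A" for y z w
    using line_conic_section_at_most_two[OF _ coeffs_alg] that
    unfolding A_def surf_fibre_fst[OF u] by blast
  then have "other_pt A v \<in> A \<and> other_pt A (other_pt A v) = v"
    by (rule other_pt_involution[OF \<open>v \<in> A\<close>])
  moreover have "sigma1 (surf a b) (u, w) = (u, other_pt A w)" for w
    unfolding sigma1_def A_def by simp
  ultimately show ?thesis unfolding x_eq A_def by simp
qed

lemma sigma2_involution:
  assumes alg: "\<forall>i<3. \<forall>j<3. \<forall>k<3. \<forall>l<3. algebraic (b i j k l)"
    and fin: "\<forall>v\<in>P2. finite {u. (u, v) \<in> surf a b}" and x: "x \<in> surf a b"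
  shows "sigma2 (surf a b) x \<in> surf a b \<and> sigma2 (surf a b) (sigma2 (surf a b) x) = x
    \<and> snd (sigma2 (surf a b) x) = snd x"
proof -
  obtain u v where x_eq: "x = (u, v)" by fastforce
  define A where "A = {w. (w, v) \<in> surf a b}"
  have v: "v \<in> P2" and "u \<in> A" using x unfolding x_eq A_def surf_def by auto
  have coeffs_alg: "\<forall>i<3. \<forall>j<3. algebraic (\<Sum>k<3. \<Sum>l<3. b i j k l * v k * v l)"
    using algebraic_quadratic_form[OF _ v] alg unfolding quadratic_form_def by simp
  have "finite A" using fin v unfolding A_def by blast
  then have "y = z \<or> y = w \<or> z = w" if "y \<in> A" "z \<in> A" "w \<in> A" for y z w
    using line_conic_section_at_most_two[OF _ coeffs_alg] that
    unfolding A_def surf_fibre_snd[OF v] by blast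
  then have "other_pt A u \<in> A \<and> other_pt A (other_pt A u) = u"
    by (rule other_pt_involution[OF \<open>u \<in> A\<close>])
  moreover have "sigma2 (surf a b) (w, v) = (other_pt A w, v)" for w
    unfolding sigma2_def A_def by simp
  ultimately show ?thesis unfolding x_eq A_def by simp
qed

lemma bdd_diff_on_iff_bounded: "bdd_diff_on A f g \<longleftrightarrow> bounded ((\<lambda>x. f x - g x) ` A)"
  unfolding bdd_diff_on_def bounded_real by auto

theorem proposition1p4p1:
  fixes a :: "nat \<Rightarrow> nat \<Rightarrow> complex"
    and b :: "nat \<Rightarrow> nat \<Rightarrow> nat \<Rightarrow> nat \<Rightarrow> complex"
    and hp hm hc :: "(nat \<Rightarrow> complex) \<times> (nat \<Rightarrow> complex) \<Rightarrow> real"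
  defines "S \<equiv> surf a b"
  assumes coeffs_a: "\<forall>i<3. \<forall>j<3. algebraic (a i j)"
    and coeffs_b: "\<forall>i<3. \<forall>j<3. \<forall>k<3. \<forall>l<3. algebraic (b i j k l)"
    and smooth: "smooth_ci a b"
    and finite_p1: "\<forall>u\<in>P2. finite {v. (u, v) \<in> S}"
    and finite_p2: "\<forall>v\<in>P2. finite {u. (u, v) \<in> S}"
    and hp_ht: "bdd_diff_on S hp
                  (\<lambda>(u, v). (2 + sqrt 3) * weil_height u - weil_height v)"
    and hp_eq: "\<forall>x\<in>S. hp (sigma2 S (sigma1 S x)) = (7 + 4 * sqrt 3) * hp x"
    and hm_ht: "bdd_diff_on S hm
                  (\<lambda>(u, v). - weil_height u + (2 + sqrt 3) * weil_height v)"
    and hm_eq: "\<forall>x\<in>S. hm (sigma1 S (sigma2 S x)) = (7 + 4 * sqrt 3) * hm x"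
    and hc_ht: "bdd_diff_on S hc (\<lambda>(u, v). weil_height u + weil_height v)"
    and hc_eq: "\<forall>x\<in>S. hc (sigma1 S x) + hc (sigma2 S x) = 4 * hc x"
  shows "\<forall>x\<in>S. hp x + hm x = (1 + sqrt 3) * hc x"
proof -
  define \<alpha> :: real where "\<alpha> = 2 + sqrt 3"
  have alpha_sq: "\<alpha>\<^sup>2 = 7 + 4 * sqrt 3" unfolding \<alpha>_def by (simp add: power2_eq_square algebra_simps)
  have "double_cover_heights S (sigma1 S) (sigma2 S) (\<lambda>x. weil_height (fst x))
      (\<lambda>x. weil_height (snd x)) \<alpha> hp hm hc"
  proof
    fix x assume "x \<in> S"
    then show "sigma1 S x \<in> S" "sigma1 S (sigma1 S x) = x" "sigma2 S x \<in> S"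
      "sigma2 S (sigma2 S x) = x" "weil_height (fst (sigma1 S x)) = weil_height (fst x)"
      "weil_height (snd (sigma2 S x)) = weil_height (snd x)"
      using sigma1_involution[OF coeffs_b] sigma2_involution[OF coeffs_b] finite_p1 finite_p2
      unfolding S_def by auto
  next
    show "\<alpha> > 1" using real_sqrt_ge_zero[of 3] unfolding \<alpha>_def by linarith
    show "\<alpha>\<^sup>2 - 4 * \<alpha> + 1 = 0" unfolding alpha_sq unfolding \<alpha>_def by simp
  qed (use hp_ht hm_ht hc_ht hp_eq hm_eq hc_eq alpha_sq in
      \<open>auto simp: \<alpha>_def bdd_diff_on_iff_bounded case_prod_beta elim!: bounded_image_cong\<close>)
  then show ?thesis using double_cover_heights.hp_add_hm unfolding \<alpha>_def by fastforce
qed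

end
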